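(* Let $\Delta\ge 1$ and define $F_\Delta(k,d)=\Delta^{-k\log\frac{k}{d}}$. For every positive integer $t$ and all integers $k_1,\ldots,k_t$ and $d_1,\ldots,d_t$ with $1\le k_i<d_i$ for all $i\le t$, $$\prod_{i\le t}F_\Delta(k_i,d_i)\le F_\Delta\Big(\sum_{i\le t}k_i,\sum_{i\le t}d_i\Big).$$
   Context: Logarithms are natural. *)

theory Defs
  imports Complex_Main
begin

definition F :: "real \<Rightarrow> real \<Rightarrow> real \<Rightarrow> real" where
  "F \<Delta> k d = \<Delta> powr (- k * ln (k / d))"

end

theory Submission
  imports Defs
begin

text \<open>Taking logarithms, the claim is the log-sum inequality
  \<open>K ln (K/D) \<le> \<Sum> k\<^sub>i ln (k\<^sub>i/d\<^sub>i)\<close> for \<open>K = \<Sum> k\<^sub>i\<close>, \<open>D = \<Sum> d\<^sub>i\<close>, combined with the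
  monotonicity of \<open>\<Delta> powr _\<close> for \<open>\<Delta> \<ge> 1\<close>. The log-sum inequality follows by summing the
  tangent-line bound \<open>ln x \<le> x - 1\<close> at \<open>x = d\<^sub>i K / (k\<^sub>i D)\<close>; the linear remainders
  \<open>d\<^sub>i K / D - k\<^sub>i\<close> sum to zero.\<close>

lemma mult_ln_div_ge_tangent:
  fixes a b c :: real
  assumes "a > 0" "b > 0" "c > 0"
  shows "a * ln (a / b) \<ge> a * ln c + a - b * c"
proof -
  have "ln (b * c / a) \<le> b * c / a - 1"
    using assms by (intro ln_le_minus_one) simp
  then have "a * ln (b * c / a) \<le> b * c - a"
    using \<open>a > 0\<close> by (simp add: field_simps)
  moreover have "ln (b * c / a) = ln c - ln (a / b)"
    using assms by (simp add: ln_div ln_mult)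
  ultimately show ?thesis
    by (simp add: right_diff_distrib)
qed

lemma log_sum_inequality:
  fixes k d :: "'a \<Rightarrow> real"
  assumes "finite A" "A \<noteq> {}" and pos: "\<And>i. i \<in> A \<Longrightarrow> k i > 0 \<and> d i > 0"
  shows "(\<Sum>i\<in>A. k i) * ln ((\<Sum>i\<in>A. k i) / (\<Sum>i\<in>A. d i)) \<le> (\<Sum>i\<in>A. k i * ln (k i / d i))"
proof -
  define K where "K = (\<Sum>i\<in>A. k i)"
  define D where "D = (\<Sum>i\<in>A. d i)"
  have "K > 0" "D > 0"
    unfolding K_def D_def using assms by (auto intro: sum_pos)
  then have "(\<Sum>i\<in>A. k i * ln (K / D) + k i - d i * (K / D)) \<le> (\<Sum>i\<in>A. k i * ln (k i / d i))"
    using pos by (intro sum_mono mult_ln_div_ge_tangent) auto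
  also have "(\<Sum>i\<in>A. k i * ln (K / D) + k i - d i * (K / D)) = K * ln (K / D) + K - D * (K / D)"
    unfolding K_def D_def by (simp add: sum.distrib sum_subtractf sum_distrib_right sum_divide_distrib)
  also have "\<dots> = K * ln (K / D)"
    using \<open>D > 0\<close> by simp
  finally show ?thesis
    unfolding K_def D_def .
qed

lemma prod_F:
  fixes k d :: "'a \<Rightarrow> real"
  assumes "finite A" "\<Delta> > 0"
  shows "(\<Prod>i\<in>A. F \<Delta> (k i) (d i)) = \<Delta> powr (- (\<Sum>i\<in>A. k i * ln (k i / d i)))"
  unfolding F_def using assms by (simp add: powr_sum flip: sum_negf)

lemma prod_F_le_F_sum:
  fixes k d :: "'a \<Rightarrow> real"
  assumes "\<Delta> \<ge> 1" "finite A" "A \<noteq> {}" "\<And>i. i \<in> A \<Longrightarrow> k i > 0 \<and> d i > 0"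
  shows "(\<Prod>i\<in>A. F \<Delta> (k i) (d i)) \<le> F \<Delta> (\<Sum>i\<in>A. k i) (\<Sum>i\<in>A. d i)"
proof -
  have "(\<Prod>i\<in>A. F \<Delta> (k i) (d i)) = \<Delta> powr (- (\<Sum>i\<in>A. k i * ln (k i / d i)))"
    using assms by (intro prod_F) auto
  also have "\<dots> \<le> \<Delta> powr (- (\<Sum>i\<in>A. k i) * ln ((\<Sum>i\<in>A. k i) / (\<Sum>i\<in>A. d i)))"
    using assms log_sum_inequality[of A k d] by (intro powr_mono) auto
  also have "\<dots> = F \<Delta> (\<Sum>i\<in>A. k i) (\<Sum>i\<in>A. d i)"
    unfolding F_def ..
  finally show ?thesis .
qed

theorem lemma3:
  fixes \<Delta> :: real and t :: nat and k d :: "nat \<Rightarrow> int"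
  assumes "\<Delta> \<ge> 1" and "t \<ge> 1"
    and "\<And>i. i \<in> {1..t} \<Longrightarrow> 1 \<le> k i \<and> k i < d i"
  shows "(\<Prod>i\<in>{1..t}. F \<Delta> (k i) (d i))
           \<le> F \<Delta> (\<Sum>i\<in>{1..t}. k i) (\<Sum>i\<in>{1..t}. d i)"
  using prod_F_le_F_sum[of \<Delta> "{1..t}" "\<lambda>i. real_of_int (k i)" "\<lambda>i. real_of_int (d i)"] assms
  by force

end
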